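(* Suppose that every even Gaussian integer $a+ib$ with integers $a>1$, $b>1$ can be written as $z=p+q$ with $p,q$ Gaussian primes lying in $Q=\{x+iy : x,y\in\mathbb{Z},\ x>0,\ y>0\}$. Then there are infinitely many positive integers $n$ such that $n^2+1$ is a rational prime.
   Context: Gaussian integers are the elements $a+ib$ of $\mathbb{Z}[i]$, with norm $N(a+ib)=a^2+b^2$. A Gaussian prime is an irreducible (equivalently, prime) element of $\mathbb{Z}[i]$. A Gaussian integer $z$ is called even if $N(z)$ is even (equivalently, $a+b$ is even, equivalently $z$ is divisible by $1+i$). $Q$ denotes the open first quadrant of Gaussian integers $\{a+ib: a>0, b>0\}$. *)

theory Defs
  imports "HOL-Computational_Algebra.Primes"
begin

type_synonym gauss = "int \<times> int"

definition gmult :: "gauss \<Rightarrow> gauss \<Rightarrow> gauss" where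
  "gmult z w = (fst z * fst w - snd z * snd w, fst z * snd w + snd z * fst w)"

definition gadd :: "gauss \<Rightarrow> gauss \<Rightarrow> gauss" where
  "gadd z w = (fst z + fst w, snd z + snd w)"

definition gnorm :: "gauss \<Rightarrow> int" where
  "gnorm z = fst z ^ 2 + snd z ^ 2"

definition gunit :: "gauss \<Rightarrow> bool" where
  "gunit u \<longleftrightarrow> (\<exists>v. gmult u v = (1, 0))"

definition gauss_prime :: "gauss \<Rightarrow> bool" where
  "gauss_prime p \<longleftrightarrow> p \<noteq> (0, 0) \<and> \<not> gunit p \<and>
     (\<forall>u v. p = gmult u v \<longrightarrow> gunit u \<or> gunit v)"

definition gauss_even :: "gauss \<Rightarrow> bool" where
  "gauss_even z \<longleftrightarrow> even (gnorm z)"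

definition Q :: "gauss set" where
  "Q = {z. fst z > 0 \<and> snd z > 0}"

end

theory Submission
  imports Defs "HOL-Library.Discrete_Functions" "HOL-Library.Infinite_Set"
begin

text \<open>
  Taking a = 2, both summands of (2, b) must be of the form 1 + iy with the two y adding up to b,
  so one of them is at least b/2. It remains to see that a Gaussian prime 1 + iy has prime norm
  y^2 + 1. By Thue's lemma every rational prime p dividing y^2 + 1 is a norm
  a^2 + b^2 with p dividing a + by; then a + ib divides 1 + iy, its norm p is not 1,
  so by irreducibility the cofactor is a unit and p = y^2 + 1.
\<close>

lemma gnorm_gmult: "gnorm (gmult z w) = gnorm z * gnorm w"
  by (simp add: gnorm_def gmult_def power2_eq_square algebra_simps)

lemma gunit_iff_gnorm_eq_1: "gunit u \<longleftrightarrow> gnorm u = 1"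
proof
  assume "gunit u"
  then obtain v where "gmult u v = (1, 0)"
    unfolding gunit_def by blast
  then have "gnorm u * gnorm v = gnorm (1, 0)"
    by (simp flip: gnorm_gmult)
  then have "gnorm u * gnorm v = 1"
    by (simp add: gnorm_def)
  moreover have "gnorm u \<ge> 0" "gnorm v \<ge> 0"
    by (simp_all add: gnorm_def)
  ultimately show "gnorm u = 1"
    using pos_zmult_eq_1_iff_lemma by fastforce
next
  assume "gnorm u = 1"
  then have "gmult u (fst u, - snd u) = (1, 0)"
    by (simp add: gmult_def gnorm_def power2_eq_square algebra_simps)
  then show "gunit u"
    unfolding gunit_def by blast
qed

text \<open>(c + id)(a - ib) = (ac + bd) + i(ad - bc): a + ib divides c + id iff its norm divides
  both parts of this product.\<close>
lemma gmult_eq_if_gnorm_dvd: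
  assumes "(a, b) \<noteq> (0, 0)"
    and "gnorm (a, b) dvd a * c + b * d" "gnorm (a, b) dvd a * d - b * c"
  shows "\<exists>h. (c, d) = gmult (a, b) h"
proof -
  define N where "N = gnorm (a, b)"
  have "N \<noteq> 0"
    using assms(1) by (simp add: N_def gnorm_def sum_power2_eq_zero_iff)
  obtain h1 h2 where h: "a * c + b * d = N * h1" "a * d - b * c = N * h2"
    using assms(2,3) unfolding N_def by (elim dvdE)
  have "N * (a * h1 - b * h2) = a * (a * c + b * d) - b * (a * d - b * c)"
    by (simp add: h algebra_simps)
  also have "\<dots> = N * c"
    by (simp add: N_def gnorm_def power2_eq_square algebra_simps)
  finally have c: "N * (a * h1 - b * h2) = N * c" .
  have "N * (a * h2 + b * h1) = a * (a * d - b * c) + b * (a * c + b * d)"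
    by (simp add: h algebra_simps)
  also have "\<dots> = N * d"
    by (simp add: N_def gnorm_def power2_eq_square algebra_simps)
  finally have d: "N * (a * h2 + b * h1) = N * d" .
  from c d \<open>N \<noteq> 0\<close> have "(c, d) = gmult (a, b) (h1, h2)"
    by (simp add: gmult_def)
  then show ?thesis ..
qed

lemma thue_lemma:
  fixes m y :: int and s :: nat
  assumes "0 < m" "m < (int s + 1)\<^sup>2"
  shows "\<exists>a b. (a, b) \<noteq> (0, 0) \<and> \<bar>a\<bar> \<le> int s \<and> \<bar>b\<bar> \<le> int s \<and> m dvd a + b * y"
proof -
  define A where "A = {0..int s} \<times> {0..int s}"
  define f where "f = (\<lambda>(u, v). (u + v * y) mod m)"
  have "card (f ` A) \<le> card {0..<m}"
    by (rule card_mono) (auto simp: f_def \<open>0 < m\<close>)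
  also have "\<dots> < card A"
  proof -
    have "card A = nat ((int s + 1)\<^sup>2)"
      by (simp add: A_def card_cartesian_product power2_eq_square nat_mult_distrib)
    with assms show ?thesis
      by simp
  qed
  finally have "\<not> inj_on f A"
    by (rule pigeonhole)
  then obtain u1 v1 u2 v2 where uv: "(u1, v1) \<in> A" "(u2, v2) \<in> A" "(u1, v1) \<noteq> (u2, v2)"
    and "(u1 + v1 * y) mod m = (u2 + v2 * y) mod m"
    unfolding inj_on_def f_def by auto
  then have "m dvd (u1 - u2) + (v1 - v2) * y"
    by (simp add: mod_eq_dvd_iff algebra_simps)
  moreover have "\<bar>u1 - u2\<bar> \<le> int s" "\<bar>v1 - v2\<bar> \<le> int s" "(u1 - u2, v1 - v2) \<noteq> (0, 0)"
    using uv by (auto simp: A_def)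
  ultimately show ?thesis
    by blast
qed

lemma prime_dvd_square_plus_one_sum_two_squares:
  fixes p y :: int
  assumes "prime p" "p dvd y\<^sup>2 + 1"
  shows "\<exists>a b. a\<^sup>2 + b\<^sup>2 = p \<and> p dvd a + b * y"
proof -
  define s where "s = floor_sqrt (nat p)"
  have "p > 1"
    using assms(1) prime_gt_1_int by blast
  have "s\<^sup>2 \<le> nat p"
    by (simp add: s_def)
  then have "int s ^ 2 \<le> p"
    using \<open>p > 1\<close> by (simp add: le_nat_iff)
  moreover have "int s ^ 2 \<noteq> p" \<comment> \<open>hence a^2 + b^2 < 2p below\<close>
    using assms(1) prime_power_iff[of "int s" 2] by auto
  ultimately have "int s ^ 2 < p"
    by simp
  have "nat p < (s + 1)\<^sup>2"
    using Suc_floor_sqrt_power2_gt[of "nat p"] unfolding s_def by simp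
  then have "p < (int s + 1)\<^sup>2"
    using \<open>p > 1\<close> by (simp add: nat_less_iff add.commute)
  then obtain a b where ab: "(a, b) \<noteq> (0, 0)" "\<bar>a\<bar> \<le> int s" "\<bar>b\<bar> \<le> int s" "p dvd a + b * y"
    using thue_lemma[of p s y] \<open>p > 1\<close> by auto
  have "a\<^sup>2 + b\<^sup>2 = (a + b * y) * (a - b * y) + b\<^sup>2 * (y\<^sup>2 + 1)"
    by (simp add: algebra_simps power2_eq_square)
  then have "p dvd a\<^sup>2 + b\<^sup>2"
    using ab(4) assms(2) by simp
  then obtain t where t: "a\<^sup>2 + b\<^sup>2 = p * t"
    by (elim dvdE)
  have "a\<^sup>2 \<le> int s ^ 2" "b\<^sup>2 \<le> int s ^ 2"
    using ab(2,3) abs_le_square_iff[of a "int s"] abs_le_square_iff[of b "int s"] by auto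
  with \<open>int s ^ 2 < p\<close> have "p * t < p * 2"
    unfolding t[symmetric] by linarith
  moreover have "p * t > 0"
    using ab(1) by (simp flip: t add: sum_power2_gt_zero_iff)
  ultimately have "t = 1"
    using \<open>p > 1\<close> by (simp add: zero_less_mult_iff)
  with t ab(4) show ?thesis
    by auto
qed

lemma gauss_prime_imp_prime_norm:
  assumes "gauss_prime (1, y)"
  shows "prime (y\<^sup>2 + 1)"
proof -
  define n where "n = y\<^sup>2 + 1"
  have "n \<noteq> 1"
    using assms by (simp add: gauss_prime_def gunit_iff_gnorm_eq_1 gnorm_def n_def)
  moreover have "n > 0"
    by (simp add: n_def add_pos_nonneg)
  ultimately obtain p where p: "prime p" "p dvd n"
    using prime_divisor_exists[of n] by auto
  then obtain a b where ab: "a\<^sup>2 + b\<^sup>2 = p" "p dvd a + b * y"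
    using prime_dvd_square_plus_one_sum_two_squares unfolding n_def by blast
  have "a * y - b = y * (a + b * y) - b * n"
    by (simp add: n_def algebra_simps power2_eq_square)
  then have "p dvd a * y - b"
    using ab(2) p(2) by simp
  moreover have "(a, b) \<noteq> (0, 0)"
    using ab(1) p(1) by auto
  ultimately obtain h where h: "(1, y) = gmult (a, b) h"
    using gmult_eq_if_gnorm_dvd[of a b 1 y] ab by (auto simp: gnorm_def)
  have "\<not> gunit (a, b)"
    using ab(1) p(1) by (auto simp: gunit_iff_gnorm_eq_1 gnorm_def)
  moreover have "gunit (a, b) \<or> gunit h"
    using assms h unfolding gauss_prime_def by blast
  ultimately have "gnorm h = 1"
    by (simp add: gunit_iff_gnorm_eq_1)
  have "y\<^sup>2 + 1 = gnorm (1, y)"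
    by (simp add: gnorm_def)
  also have "\<dots> = gnorm (a, b) * gnorm h"
    by (simp add: h gnorm_gmult)
  also have "\<dots> = p"
    using ab(1) \<open>gnorm h = 1\<close> by (simp add: gnorm_def)
  finally show ?thesis
    using p(1) by simp
qed

lemma Q_summands_of_2:
  assumes "(2, b) = gadd z w" "z \<in> Q" "w \<in> Q"
  shows "z = (1, snd z)" "w = (1, snd w)" "snd z + snd w = b"
  using assms by (auto simp: gadd_def Q_def prod_eq_iff)

theorem mainTheorem1:
  assumes "\<forall>a b :: int. a > 1 \<and> b > 1 \<and> gauss_even (a, b) \<longrightarrow>
             (\<exists>p q. gauss_prime p \<and> gauss_prime q \<and> p \<in> Q \<and> q \<in> Q \<and> (a, b) = gadd p q)"
  shows "infinite {n :: nat. n > 0 \<and> prime (n ^ 2 + 1)}"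
  unfolding infinite_nat_iff_unbounded
proof
  fix N :: nat
  define b where "b = 2 * int N + 2"
  have "gauss_even (2, b)"
    by (simp add: gauss_even_def gnorm_def b_def power2_eq_square)
  then obtain z w where zw: "gauss_prime z" "gauss_prime w" "z \<in> Q" "w \<in> Q" "(2, b) = gadd z w"
    using assms[rule_format, of 2 b] b_def by auto
  note summands = Q_summands_of_2[OF zw(5,3,4)]
  have "\<exists>y. int N < y \<and> gauss_prime (1, y)"
  proof (cases "int N < snd z")
    case True
    with zw(1) summands(1) show ?thesis
      by metis
  next
    case False
    with summands(3) b_def have "int N < snd w"
      by linarith
    with zw(2) summands(2) show ?thesis
      by metis
  qed
  then obtain y where "int N < y" "prime (y\<^sup>2 + 1)"
    using gauss_prime_imp_prime_norm by blast
  then have "N < nat y" "prime (nat y ^ 2 + 1)"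
    by (simp_all add: prime_int_nat_transfer nat_add_distrib nat_power_eq)
  then show "\<exists>n > N. n \<in> {n. n > 0 \<and> prime (n ^ 2 + 1)}"
    by auto
qed

end
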